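(* Let $\Delta\ge 2$ and $0<k_2<k_1\le k$ be integers and $0<\beta<1$. Let $H=(V,\mathcal E)$ be a hypergraph with pinnings $\mathcal P$, maximum degree $\Delta$, and $k_1\le|e|\le k$ for every $e\in\mathcal E$. Fix a vertex $v$ contained in at least one hyperedge, a colour $c_1\in[q]$, and let $e_0$ be the first hyperedge containing $v$ in a fixed ordering of $\mathcal E$. Suppose $q^{1-k_2}<\beta$, $q>(\mathrm e k\Delta)^{\frac{1}{k_1-2}}$ and $q>C\Delta^{\frac{3}{\beta(k_2-1)}}$ where $C^{\beta(k_2-1)}\ge\frac{\mathrm e^{\beta+3}k^3}{\beta^\beta}\binom{k}{k_2}$. Then for every positive integer $\ell$, $$\frac{|\{\sigma\in\mathcal C_1:\sigma\text{ is }\ell\text{-bad}\}|}{|\mathcal C_1|}\le e^{-\ell}.$$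
   Context: A hypergraph with pinnings is $(H,\mathcal P)$ with $H=(V,\mathcal E)$ and $\mathcal P=\{P_e\subseteq[q]:e\in\mathcal E\}$; $\sigma\in[q]^V$ is proper if $|\{\sigma(u):u\in e\}\cup P_e|>1$ for all $e$. The maximum degree is the maximum number of hyperedges containing a vertex. $\mathcal C_1$ is the set of proper colourings $\sigma$ with $\sigma(v)=c_1$. $\mathrm{Lin}(H)$ is the line graph of $H$ (vertices are hyperedges, two distinct hyperedges adjacent iff they intersect). A set $T$ of vertices of a graph $G$ is a $\{2,3\}$-tree if its elements are pairwise at distance $\ge2$ in $G$ and the graph on $T$ joining pairs at $G$-distance $2$ or $3$ is connected. A colouring $\sigma\in\mathcal C_1$ is $\ell$-bad if there exist a $\{2,3\}$-tree $T$ in $\mathrm{Lin}(H)$ and a set of vertices $V_{\mathrm{col}}$ such that (1) $|T|=\ell$ and $e_0\in T$; (2) $|e\cap V_{\mathrm{col}}|=k_2$ for every $e\in T$; (3) at least $\beta\ell$ hyperedges $e\in T$ are (partially) monochromatic under $\sigma$ restricted to $V_{\mathrm{col}}$, i.e. all vertices of $e\cap V_{\mathrm{col}}$ receive the same colour under $\sigma$. $\mathrm e$ denotes Euler's number. *)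

theory Defs
  imports Complex_Main "HOL-Library.FuncSet"
begin

text \<open>Hypergraph: finite vertex set V, finite index set E of hyperedges, each hyperedge
  e given by its vertex set vert e. Colours [q] are represented as {..<q}.\<close>

definition degree :: "'b set \<Rightarrow> ('b \<Rightarrow> 'a set) \<Rightarrow> 'a \<Rightarrow> nat" where
  "degree E vert u = card {e \<in> E. u \<in> vert e}"

definition max_degree :: "'a set \<Rightarrow> 'b set \<Rightarrow> ('b \<Rightarrow> 'a set) \<Rightarrow> nat" where
  "max_degree V E vert = Max (degree E vert ` V)"

definition proper :: "'b set \<Rightarrow> ('b \<Rightarrow> 'a set) \<Rightarrow> ('b \<Rightarrow> nat set) \<Rightarrow> ('a \<Rightarrow> nat) \<Rightarrow> bool" where
  "proper E vert P \<sigma> \<longleftrightarrow> (\<forall>e\<in>E. card ((\<sigma> ` vert e) \<union> P e) > 1)"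

definition C1 :: "'a set \<Rightarrow> 'b set \<Rightarrow> ('b \<Rightarrow> 'a set) \<Rightarrow> ('b \<Rightarrow> nat set) \<Rightarrow> nat \<Rightarrow> 'a \<Rightarrow> nat \<Rightarrow> ('a \<Rightarrow> nat) set" where
  "C1 V E vert P q v c1 = {\<sigma> \<in> V \<rightarrow>\<^sub>E {..<q}. proper E vert P \<sigma> \<and> \<sigma> v = c1}"

definition lin_adj :: "'b set \<Rightarrow> ('b \<Rightarrow> 'a set) \<Rightarrow> 'b \<Rightarrow> 'b \<Rightarrow> bool" where
  "lin_adj E vert e f \<longleftrightarrow> e \<in> E \<and> f \<in> E \<and> e \<noteq> f \<and> vert e \<inter> vert f \<noteq> {}"

inductive lin_walk :: "'b set \<Rightarrow> ('b \<Rightarrow> 'a set) \<Rightarrow> nat \<Rightarrow> 'b \<Rightarrow> 'b \<Rightarrow> bool"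
  for E vert where
  walk0: "e \<in> E \<Longrightarrow> lin_walk E vert 0 e e"
| walkS: "lin_walk E vert n e g \<Longrightarrow> lin_adj E vert g f \<Longrightarrow> lin_walk E vert (Suc n) e f"

definition lin_dist_le :: "'b set \<Rightarrow> ('b \<Rightarrow> 'a set) \<Rightarrow> nat \<Rightarrow> 'b \<Rightarrow> 'b \<Rightarrow> bool" where
  "lin_dist_le E vert n e f \<longleftrightarrow> (\<exists>m\<le>n. lin_walk E vert m e f)"

definition tree23 :: "'b set \<Rightarrow> ('b \<Rightarrow> 'a set) \<Rightarrow> 'b set \<Rightarrow> bool" where
  "tree23 E vert T \<longleftrightarrow> T \<subseteq> E
     \<and> (\<forall>e\<in>T. \<forall>f\<in>T. e \<noteq> f \<longrightarrow> \<not> lin_dist_le E vert 1 e f)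
     \<and> (\<forall>e\<in>T. \<forall>f\<in>T. (e, f) \<in> ({(x, y). x \<in> T \<and> y \<in> T \<and> x \<noteq> y
            \<and> lin_dist_le E vert 3 x y \<and> \<not> lin_dist_le E vert 1 x y})\<^sup>*)"

definition partially_mono :: "('b \<Rightarrow> 'a set) \<Rightarrow> 'a set \<Rightarrow> ('a \<Rightarrow> nat) \<Rightarrow> 'b \<Rightarrow> bool" where
  "partially_mono vert Vcol \<sigma> e \<longleftrightarrow> (\<exists>c. \<forall>u \<in> vert e \<inter> Vcol. \<sigma> u = c)"

definition is_bad :: "'b set \<Rightarrow> ('b \<Rightarrow> 'a set) \<Rightarrow> 'b \<Rightarrow> nat \<Rightarrow> real \<Rightarrow> nat \<Rightarrow> ('a \<Rightarrow> nat) \<Rightarrow> bool" where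
  "is_bad E vert e0 k2 \<beta> l \<sigma> \<longleftrightarrow> (\<exists>T Vcol. tree23 E vert T \<and> card T = l \<and> e0 \<in> T
      \<and> (\<forall>e\<in>T. card (vert e \<inter> Vcol) = k2)
      \<and> real (card {e\<in>T. partially_mono vert Vcol \<sigma> e}) \<ge> \<beta> * real l)"

end

theory Submission
  imports Defs
begin

text \<open>A bad colouring makes m = ceil(beta l) edges of some {2,3}-tree T through e0 monochromatic on
  chosen k2-subsets. The edges of T are pairwise disjoint, and a counting form of the local lemma
  (adding one constraint to any set of constraints keeps at least a fraction 1 - 2 q^(1-k1) of the
  proper colourings) shows that at most a fraction ((1 - 1/e) q^(k2-1))^(-m) of the proper
  colourings are monochromatic on m such blocks. A union bound over the at most
  4^(l-1) (k Delta)^(3(l-1)) trees (a tree is connected in the graph joining hyperedges at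
  line-graph distance 2 or 3, and connected sets are counted through a depth-first encoding), the
  (l choose m) choices of edges and the (k choose k2)^m choices of blocks gives e^(-l) under the
  hypotheses on q.\<close>

section \<open>Colourings proper on a set of hyperedges\<close>

definition pinned_colourings :: "'a set \<Rightarrow> nat \<Rightarrow> 'a \<Rightarrow> nat \<Rightarrow> ('a \<Rightarrow> nat) set" where
  "pinned_colourings V q v c = {\<sigma> \<in> V \<rightarrow>\<^sub>E {..<q}. \<sigma> v = c}"

definition proper_on ::
  "'a set \<Rightarrow> ('b \<Rightarrow> 'a set) \<Rightarrow> ('b \<Rightarrow> nat set) \<Rightarrow> nat \<Rightarrow> 'a \<Rightarrow> nat \<Rightarrow> 'b set \<Rightarrow> ('a \<Rightarrow> nat) set"
where
  "proper_on V vert P q v c F =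
     {\<sigma> \<in> pinned_colourings V q v c. \<forall>f\<in>F. 1 < card (\<sigma> ` vert f \<union> P f)}"

definition constant_on_blocks :: "('a \<Rightarrow> nat) \<Rightarrow> 'b set \<Rightarrow> ('b \<Rightarrow> 'a set) \<Rightarrow> bool" where
  "constant_on_blocks \<sigma> M S \<longleftrightarrow> (\<forall>e\<in>M. \<forall>u\<in>S e. \<forall>w\<in>S e. \<sigma> u = \<sigma> w)"

lemma C1_eq_proper_on: "C1 V E vert P q v c = proper_on V vert P q v c E"
  by (auto simp: C1_def proper_on_def pinned_colourings_def proper_def)

lemma finite_pinned_colourings: "finite V \<Longrightarrow> finite (pinned_colourings V q v c)"
  unfolding pinned_colourings_def by (auto intro: finite_subset[OF _ finite_PiE[of V "\<lambda>_. {..<q}"]])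

lemma proper_on_subset_pinned: "proper_on V vert P q v c F \<subseteq> pinned_colourings V q v c"
  unfolding proper_on_def by auto

lemma finite_proper_on: "finite V \<Longrightarrow> finite (proper_on V vert P q v c F)"
  using finite_pinned_colourings proper_on_subset_pinned by (rule finite_subset[rotated])

lemma proper_on_antimono: "F \<subseteq> F' \<Longrightarrow> proper_on V vert P q v c F' \<subseteq> proper_on V vert P q v c F"
  unfolding proper_on_def by auto

lemma proper_on_insert:
  "proper_on V vert P q v c (insert f F) =
     proper_on V vert P q v c F - {\<sigma>. card (\<sigma> ` vert f \<union> P f) \<le> 1}"
  unfolding proper_on_def by auto

text \<open>Recolouring the vertices of \<open>W\<close> arbitrarily inside a colouring satisfying \<open>B\<close> is an
  injection of \<open>{\<sigma>\<in>G. B \<sigma>} \<times> [q]\<^sup>W\<close> into \<open>G\<close>.\<close>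

lemma card_times_power_le_by_recolouring:
  fixes G :: "('a \<Rightarrow> nat) set"
  assumes "finite V" and "W \<subseteq> V" and "v \<notin> W" and G: "G \<subseteq> pinned_colourings V q v c"
    and closed: "\<And>\<sigma> \<tau>. \<sigma> \<in> G \<Longrightarrow> \<tau> \<in> pinned_colourings V q v c \<Longrightarrow>
                    (\<forall>u. u \<notin> W \<longrightarrow> \<tau> u = \<sigma> u) \<Longrightarrow> \<tau> \<in> G"
    and determined: "\<And>\<sigma> \<tau>. \<sigma> \<in> G \<Longrightarrow> \<tau> \<in> G \<Longrightarrow> B \<sigma> \<Longrightarrow> B \<tau> \<Longrightarrow>
                    (\<forall>u. u \<notin> W \<longrightarrow> \<sigma> u = \<tau> u) \<Longrightarrow> \<sigma> = \<tau>"
  shows "card {\<sigma>\<in>G. B \<sigma>} * q ^ card W \<le> card G"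
proof -
  have "finite W" using assms(1,2) by (rule finite_subset[rotated])
  have "finite G" using G finite_pinned_colourings[OF assms(1)] by (rule finite_subset)
  define A where "A = {\<sigma>\<in>G. B \<sigma>} \<times> (W \<rightarrow>\<^sub>E {..<q})"
  define h where "h = (\<lambda>(\<sigma>::'a \<Rightarrow> nat, \<rho>::'a \<Rightarrow> nat) u. if u \<in> W then \<rho> u else \<sigma> u)"
  have "h p \<in> G" if "p \<in> A" for p
  proof -
    obtain \<sigma> \<rho> where p: "p = (\<sigma>, \<rho>)" "\<sigma> \<in> G" "\<rho> \<in> W \<rightarrow>\<^sub>E {..<q}"
      using \<open>p \<in> A\<close> unfolding A_def by auto
    then have "\<sigma> \<in> pinned_colourings V q v c" using G by auto
    then have "h p \<in> pinned_colourings V q v c"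
      using p assms(2,3) by (auto simp: h_def pinned_colourings_def PiE_iff extensional_def)
    then show ?thesis using closed[OF p(2)] by (auto simp: h_def p(1))
  qed
  moreover have "inj_on h A"
  proof (rule inj_onI)
    fix p p' assume "p \<in> A" "p' \<in> A" and hp: "h p = h p'"
    obtain \<sigma> \<rho> \<sigma>' \<rho>' where p: "p = (\<sigma>, \<rho>)" and p': "p' = (\<sigma>', \<rho>')" by fastforce
    have "\<rho> = \<rho>'"
    proof
      fix u show "\<rho> u = \<rho>' u"
        using fun_cong[OF hp, of u] \<open>p \<in> A\<close> \<open>p' \<in> A\<close>
        by (cases "u \<in> W") (auto simp: p p' h_def A_def PiE_def extensional_def)
    qed
    moreover have "\<forall>u. u \<notin> W \<longrightarrow> \<sigma> u = \<sigma>' u"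
      using fun_cong[OF hp] by (simp add: p p' h_def) metis
    then have "\<sigma> = \<sigma>'"
      using determined \<open>p \<in> A\<close> \<open>p' \<in> A\<close> by (auto simp: p p' A_def)
    ultimately show "p = p'" using p p' by simp
  qed
  ultimately have "card A \<le> card G"
    using \<open>finite G\<close> by (metis card_image card_mono image_subsetI)
  then show ?thesis
    by (simp add: A_def card_cartesian_product card_funcsetE[OF \<open>finite W\<close>])
qed

locale pinned_hypergraph =
  fixes V :: "'a set" and E :: "'b set" and vert :: "'b \<Rightarrow> 'a set" and P :: "'b \<Rightarrow> nat set"
    and q :: nat and v :: 'a and c1 :: nat and \<Delta> k k1 :: nat
  assumes finite_V: "finite V" and finite_E: "finite E" and vert_subset: "\<forall>e\<in>E. vert e \<subseteq> V"
    and pinnings_subset: "\<forall>e\<in>E. P e \<subseteq> {..<q}"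
    and degree_le: "\<forall>u\<in>V. degree E vert u \<le> \<Delta>"
    and edge_card: "\<forall>e\<in>E. k1 \<le> card (vert e) \<and> card (vert e) \<le> k"
    and k1_pos: "1 \<le> k1" and q_pos: "1 \<le> q" and k\<Delta>_pos: "1 \<le> k * \<Delta>"
    and local_lemma_condition: "2 * real k * real \<Delta> / real q ^ (k1 - 1) \<le> exp (-1)"
begin

abbreviation good :: "'b set \<Rightarrow> ('a \<Rightarrow> nat) set" where
  "good F \<equiv> proper_on V vert P q v c1 F"

lemma finite_vert: "e \<in> E \<Longrightarrow> finite (vert e)"
  using vert_subset finite_V finite_subset by blast

lemma finite_good: "finite (good F)"
  by (rule finite_proper_on[OF finite_V])

lemma card_good_restrict_mono: "F \<subseteq> F' \<Longrightarrow> card {\<sigma>\<in>good F'. Q \<sigma>} \<le> card {\<sigma>\<in>good F. Q \<sigma>}"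
  using proper_on_antimono[of F F' V vert P q v c1] finite_good by (intro card_mono) auto

lemma card_constant_on_blocks_times_power_le:
  assumes ME: "M \<subseteq> E"
    and disj: "\<forall>e\<in>M. \<forall>f\<in>M. e \<noteq> f \<longrightarrow> vert e \<inter> vert f = {}"
    and S: "\<forall>e\<in>M. S e \<subseteq> vert e \<and> S e \<noteq> {}"
    and away: "\<forall>g\<in>F. vert g \<inter> (\<Union>e\<in>M. S e) = {}"
  shows "card {\<sigma>\<in>good F. constant_on_blocks \<sigma> M S} * q ^ (\<Sum>e\<in>M. card (S e) - 1) \<le> card (good F)"
proof -
  have "finite M" using ME finite_E finite_subset by auto
  define r where "r e = (if v \<in> S e then v else (SOME u. u \<in> S e))" for e
  have r_in: "r e \<in> S e" if "e \<in> M" for e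
    using S that some_in_eq[of "S e"] unfolding r_def by auto
  have SV: "S e \<subseteq> V" if "e \<in> M" for e using S vert_subset ME that by blast
  have fin_S: "finite (S e)" if "e \<in> M" for e using SV[OF that] finite_V finite_subset by auto
  have S_disj: "S e \<inter> S f = {}" if "e \<in> M" "f \<in> M" "e \<noteq> f" for e f
    using disj S that by blast
  text \<open>Keeping one representative \<open>r e\<close> per block, the other vertices of the blocks may be
    recoloured freely; \<open>v\<close> is chosen as representative whenever possible since its colour is pinned.\<close>
  define W where "W = (\<Union>e\<in>M. S e - {r e})"
  have "card W = (\<Sum>e\<in>M. card (S e) - 1)"
    unfolding W_def
    by (subst card_UN_disjoint) (use \<open>finite M\<close> fin_S S_disj r_in in \<open>auto simp: card_Diff_singleton\<close>)
  moreover have "card {\<sigma>\<in>good F. constant_on_blocks \<sigma> M S} * q ^ card W \<le> card (good F)"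
  proof (rule card_times_power_le_by_recolouring[OF finite_V _ _ proper_on_subset_pinned])
    show "W \<subseteq> V" unfolding W_def using SV by auto
    show "v \<notin> W" unfolding W_def r_def by auto
  next
    fix \<sigma> \<tau> assume \<sigma>: "\<sigma> \<in> good F" and \<tau>: "\<tau> \<in> pinned_colourings V q v c1"
      and agree: "\<forall>u. u \<notin> W \<longrightarrow> \<tau> u = \<sigma> u"
    have "\<tau> ` vert f = \<sigma> ` vert f" if "f \<in> F" for f
      using agree away that unfolding W_def by (intro image_cong) blast+
    then show "\<tau> \<in> good F" using \<sigma> \<tau> unfolding proper_on_def by simp
  next
    fix \<sigma> \<tau> assume B: "constant_on_blocks \<sigma> M S" "constant_on_blocks \<tau> M S"
      and agree: "\<forall>u. u \<notin> W \<longrightarrow> \<sigma> u = \<tau> u"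
    have r_notin: "r e \<notin> W" if "e \<in> M" for e
      using S_disj[OF that] r_in[OF that] unfolding W_def by blast
    show "\<sigma> = \<tau>"
    proof
      fix u show "\<sigma> u = \<tau> u"
      proof (cases "u \<in> W")
        case True
        then obtain e where e: "e \<in> M" "u \<in> S e" unfolding W_def by auto
        then have "\<sigma> u = \<sigma> (r e)" "\<tau> u = \<tau> (r e)"
          using B r_in unfolding constant_on_blocks_def by blast+
        then show ?thesis using agree r_notin[OF e(1)] by simp
      qed (use agree in simp)
    qed
  qed
  ultimately show ?thesis by simp
qed

lemma card_edges_meeting_le:
  assumes "A \<subseteq> V"
  shows "card {g\<in>E. vert g \<inter> A \<noteq> {}} \<le> card A * \<Delta>"
proof -
  have "finite A" using assms finite_V finite_subset by auto
  have "{g\<in>E. vert g \<inter> A \<noteq> {}} = (\<Union>u\<in>A. {g\<in>E. u \<in> vert g})" by auto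
  then have "card {g\<in>E. vert g \<inter> A \<noteq> {}} \<le> (\<Sum>u\<in>A. card {g\<in>E. u \<in> vert g})"
    using card_UN_le[OF \<open>finite A\<close>] by simp
  also have "\<dots> \<le> (\<Sum>u\<in>A. \<Delta>)"
    by (rule sum_mono) (use degree_le assms in \<open>auto simp: degree_def\<close>)
  finally show ?thesis by simp
qed

end


section \<open>The local lemma in counting form\<close>

lemma exp_minus_one_le_half: "exp (-1) \<le> (1/2 :: real)"
proof -
  have "2 \<le> exp (1::real)" using exp_ge_add_one_self[of 1] by simp
  then show ?thesis by (simp add: exp_minus field_simps)
qed

context pinned_hypergraph
begin

definition lll_x :: real where
  "lll_x = 2 / real q ^ (k1 - 1)"

lemma lll_x_nonneg: "0 \<le> lll_x"
  unfolding lll_x_def by simp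

lemma degree_times_lll_x_le: "real k * real \<Delta> * lll_x \<le> exp (-1)"
  using local_lemma_condition unfolding lll_x_def by (simp add: ac_simps)

lemma lll_x_le_1: "lll_x \<le> 1"
proof -
  have "1 \<le> real k * real \<Delta>" using k\<Delta>_pos by (simp flip: of_nat_mult)
  then have "lll_x \<le> real k * real \<Delta> * lll_x" using lll_x_nonneg by (simp add: mult_le_cancel_right1)
  moreover have "exp (-1) \<le> (1::real)" by simp
  ultimately show ?thesis using degree_times_lll_x_le by linarith
qed

lemma power_one_minus_lll_x_ge:
  assumes "n \<le> k * \<Delta>"
  shows "1 - exp (-1) \<le> (1 - lll_x) ^ n"
proof -
  have "real n * lll_x \<le> real k * real \<Delta> * lll_x"
    using assms lll_x_nonneg by (intro mult_right_mono) (auto simp flip: of_nat_mult)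
  moreover have "1 + real n * (- lll_x) \<le> (1 + - lll_x) ^ n"
    using lll_x_le_1 by (intro Bernoulli_inequality) simp
  ultimately show ?thesis using degree_times_lll_x_le by simp
qed

lemma card_edges_meeting_edge_le:
  assumes "f \<in> E"
  shows "card {g\<in>E. vert g \<inter> vert f \<noteq> {}} \<le> k * \<Delta>"
proof -
  have "card {g\<in>E. vert g \<inter> vert f \<noteq> {}} \<le> card (vert f) * \<Delta>"
    using card_edges_meeting_le vert_subset assms by blast
  also have "\<dots> \<le> k * \<Delta>" using edge_card assms by simp
  finally show ?thesis .
qed

lemma card_good_ge_of_insert_ge:
  assumes "finite G"
    and step: "\<And>H g. H \<subseteq> G \<Longrightarrow> g \<in> G \<Longrightarrow> g \<notin> H \<Longrightarrow>
       (1 - lll_x) * real (card (good (F \<union> H))) \<le> real (card (good (insert g (F \<union> H))))"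
  shows "(1 - lll_x) ^ card G * real (card (good F)) \<le> real (card (good (F \<union> G)))"
proof -
  have "(1 - lll_x) ^ card H * real (card (good F)) \<le> real (card (good (F \<union> H)))"
    if "finite H" "H \<subseteq> G" for H
    using that
  proof (induction H rule: finite_induct)
    case (insert g H)
    have "(1 - lll_x) ^ card (insert g H) * real (card (good F))
        = (1 - lll_x) * ((1 - lll_x) ^ card H * real (card (good F)))"
      using insert by simp
    also have "\<dots> \<le> (1 - lll_x) * real (card (good (F \<union> H)))"
      using insert lll_x_le_1 by (intro mult_left_mono) auto
    also have "\<dots> \<le> real (card (good (insert g (F \<union> H))))"
      using step insert by auto
    finally show ?case by simp
  qed simp
  then show ?thesis using assms(1) by blast
qed

lemma card_violating_le:
  assumes f: "f \<in> E" and away: "\<forall>g\<in>F. vert g \<inter> vert f = {}"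
  shows "real (card {\<sigma>\<in>good F. card (\<sigma> ` vert f \<union> P f) \<le> 1}) \<le> lll_x / 2 * real (card (good F))"
proof -
  have "vert f \<noteq> {}" using edge_card f k1_pos by fastforce
  have "{\<sigma>\<in>good F. card (\<sigma> ` vert f \<union> P f) \<le> 1} \<subseteq> {\<sigma>\<in>good F. constant_on_blocks \<sigma> {f} vert}"
  proof safe
    fix \<sigma> assume "card (\<sigma> ` vert f \<union> P f) \<le> 1"
    moreover have "finite (\<sigma> ` vert f \<union> P f)"
      using finite_vert[OF f] pinnings_subset f finite_subset[of "P f" "{..<q}"] by auto
    ultimately show "constant_on_blocks \<sigma> {f} vert"
      unfolding constant_on_blocks_def by (auto simp: card_le_Suc0_iff_eq)
  qed
  then have "card {\<sigma>\<in>good F. card (\<sigma> ` vert f \<union> P f) \<le> 1}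
      \<le> card {\<sigma>\<in>good F. constant_on_blocks \<sigma> {f} vert}"
    by (rule card_mono[OF finite_subset[OF _ finite_good], rotated]) auto
  moreover have "card {\<sigma>\<in>good F. constant_on_blocks \<sigma> {f} vert} * q ^ (card (vert f) - 1) \<le> card (good F)"
    using card_constant_on_blocks_times_power_le[of "{f}" vert F] f away \<open>vert f \<noteq> {}\<close>
    by (simp add: Int_commute)
  ultimately have "card {\<sigma>\<in>good F. card (\<sigma> ` vert f \<union> P f) \<le> 1} * q ^ (card (vert f) - 1) \<le> card (good F)"
    by (meson le_trans mult_le_mono1)
  moreover have "q ^ (k1 - 1) \<le> q ^ (card (vert f) - 1)"
    using edge_card f q_pos by (intro power_increasing) auto
  ultimately have "card {\<sigma>\<in>good F. card (\<sigma> ` vert f \<union> P f) \<le> 1} * q ^ (k1 - 1) \<le> card (good F)"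
    by (meson le_trans mult_le_mono2)
  then have "real (card {\<sigma>\<in>good F. card (\<sigma> ` vert f \<union> P f) \<le> 1}) * real q ^ (k1 - 1) \<le> real (card (good F))"
    by (simp flip: of_nat_mult of_nat_power)
  then show ?thesis
    using q_pos by (simp add: lll_x_def pos_le_divide_eq)
qed


lemma card_good_insert:
  "real (card (good (insert f F)))
     = real (card (good F)) - real (card {\<sigma>\<in>good F. card (\<sigma> ` vert f \<union> P f) \<le> 1})"
proof -
  have "good (insert f F) = good F - {\<sigma>\<in>good F. card (\<sigma> ` vert f \<union> P f) \<le> 1}"
    unfolding proper_on_insert by blast
  moreover have "card {\<sigma>\<in>good F. card (\<sigma> ` vert f \<union> P f) \<le> 1} \<le> card (good F)"
    by (rule card_mono[OF finite_good]) auto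
  ultimately show ?thesis
    using card_Diff_subset[OF finite_subset[OF _ finite_good], of "{\<sigma>\<in>good F. card (\<sigma> ` vert f \<union> P f) \<le> 1}" F]
    by (simp add: of_nat_diff)
qed

text \<open>By induction, imposing the constraints of \<open>F\<close> that meet \<open>f\<close> on top of the others loses at
  most a factor 2, while among the colourings proper on the constraints disjoint from \<open>f\<close> at most a
  fraction \<open>lll_x / 2\<close> violate \<open>f\<close>.\<close>

lemma card_good_insert_ge:
  "F \<subseteq> E \<Longrightarrow> f \<in> E \<Longrightarrow> (1 - lll_x) * real (card (good F)) \<le> real (card (good (insert f F)))"
proof (induction "card F" arbitrary: F f rule: less_induct)
  case less
  have "finite F" using less.prems(1) finite_E finite_subset by auto
  show ?case
  proof (cases "f \<in> F")
    case True
    then show ?thesis using lll_x_nonneg by (simp add: insert_absorb algebra_simps)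
  next
    case False
    define F1 where "F1 = {g\<in>F. vert g \<inter> vert f \<noteq> {}}"
    define F2 where "F2 = F - F1"
    have F: "F = F2 \<union> F1" unfolding F1_def F2_def by auto
    have "(1 - lll_x) ^ card F1 * real (card (good F2)) \<le> real (card (good (F2 \<union> F1)))"
    proof (rule card_good_ge_of_insert_ge)
      show "finite F1" using \<open>finite F\<close> unfolding F1_def by simp
      fix H g assume "H \<subseteq> F1" "g \<in> F1" "g \<notin> H"
      then have "F2 \<union> H \<subset> F" "g \<in> F" unfolding F1_def F2_def by auto
      then show "(1 - lll_x) * real (card (good (F2 \<union> H))) \<le> real (card (good (insert g (F2 \<union> H))))"
        using less.hyps[OF psubset_card_mono[OF \<open>finite F\<close>]] less.prems(1) by blast
    qed
    moreover have "card F1 \<le> card {g\<in>E. vert g \<inter> vert f \<noteq> {}}"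
      using finite_E less.prems(1) unfolding F1_def by (intro card_mono) auto
    then have "card F1 \<le> k * \<Delta>"
      using card_edges_meeting_edge_le[OF less.prems(2)] by linarith
    then have "1/2 \<le> (1 - lll_x) ^ card F1"
      using power_one_minus_lll_x_ge exp_minus_one_le_half by fastforce
    ultimately have half: "real (card (good F2)) \<le> 2 * real (card (good F))"
      using F mult_right_mono[of "1/2" "(1 - lll_x) ^ card F1" "real (card (good F2))"] by simp
    have "card {\<sigma>\<in>good F. card (\<sigma> ` vert f \<union> P f) \<le> 1}
        \<le> card {\<sigma>\<in>good F2. card (\<sigma> ` vert f \<union> P f) \<le> 1}"
      by (rule card_good_restrict_mono) (auto simp: F2_def)
    also have "real \<dots> \<le> lll_x / 2 * real (card (good F2))"
      using less.prems by (intro card_violating_le) (auto simp: F2_def F1_def)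
    also have "\<dots> \<le> lll_x * real (card (good F))"
      using mult_left_mono[OF half lll_x_nonneg] by simp
    finally show ?thesis using card_good_insert[of f F] by (simp add: algebra_simps)
  qed
qed

lemma card_good_union_ge:
  assumes "F \<subseteq> E" "G \<subseteq> E"
  shows "(1 - lll_x) ^ card G * real (card (good F)) \<le> real (card (good (F \<union> G)))"
  by (rule card_good_ge_of_insert_ge) (use assms finite_E finite_subset in \<open>auto intro!: card_good_insert_ge\<close>)


lemma power_one_minus_exp_le:
  assumes "n \<le> j * (k2 * \<Delta>)" and "k2 \<le> k"
  shows "(1 - exp (-1)) ^ j \<le> (1 - lll_x) ^ n"
proof -
  have "(1 - exp (-1)) ^ j \<le> ((1 - lll_x) ^ (k2 * \<Delta>)) ^ j"
    using power_one_minus_lll_x_ge[of "k2 * \<Delta>"] assms(2) exp_minus_one_le_half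
    by (intro power_mono) auto
  also have "\<dots> \<le> (1 - lll_x) ^ n"
    using assms(1) lll_x_nonneg lll_x_le_1
    by (simp add: power_mult[symmetric] mult.commute power_decreasing)
  finally show ?thesis .
qed

lemma card_constant_on_blocks_le:
  assumes ME: "M \<subseteq> E"
    and disj: "\<forall>e\<in>M. \<forall>f\<in>M. e \<noteq> f \<longrightarrow> vert e \<inter> vert f = {}"
    and S: "\<forall>e\<in>M. S e \<subseteq> vert e \<and> card (S e) = k2" and k2: "1 \<le> k2" "k2 \<le> k"
  shows "real (card {\<sigma>\<in>good E. constant_on_blocks \<sigma> M S}) * ((1 - exp (-1)) * real q ^ (k2 - 1)) ^ card M
           \<le> real (card (good E))"
proof -
  have "finite M" using ME finite_E finite_subset by auto
  define R where "R = (\<Union>e\<in>M. S e)"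
  define F where "F = {g\<in>E. vert g \<inter> R = {}}"
  define G where "G = {g\<in>E. vert g \<inter> R \<noteq> {}}"
  have "F \<union> G = E" unfolding F_def G_def by auto
  have "R \<subseteq> V" unfolding R_def using S ME vert_subset by blast
  have "card R = (\<Sum>e\<in>M. card (S e))"
    unfolding R_def
  proof (rule card_UN_disjoint[OF \<open>finite M\<close>])
    show "\<forall>e\<in>M. finite (S e)" using S k2 by (auto intro: card_ge_0_finite)
    show "\<forall>e\<in>M. \<forall>f\<in>M. e \<noteq> f \<longrightarrow> S e \<inter> S f = {}" using disj S by blast
  qed
  then have "card R = card M * k2" using S by simp
  then have "card G \<le> card M * (k2 * \<Delta>)"
    using card_edges_meeting_le[OF \<open>R \<subseteq> V\<close>] unfolding G_def by simp
  then have loss: "(1 - exp (-1)) ^ card M \<le> (1 - lll_x) ^ card G"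
    using k2(2) by (rule power_one_minus_exp_le)
  have restrict: "card {\<sigma>\<in>good E. constant_on_blocks \<sigma> M S} \<le> card {\<sigma>\<in>good F. constant_on_blocks \<sigma> M S}"
    by (rule card_good_restrict_mono) (auto simp: F_def)
  have "card {\<sigma>\<in>good F. constant_on_blocks \<sigma> M S} * q ^ ((k2 - 1) * card M) \<le> card (good F)"
  proof -
    have "(\<Sum>e\<in>M. card (S e) - 1) = (k2 - 1) * card M" using S by simp
    moreover have "card {\<sigma>\<in>good F. constant_on_blocks \<sigma> M S} * q ^ (\<Sum>e\<in>M. card (S e) - 1) \<le> card (good F)"
      using S k2 unfolding F_def R_def
      by (intro card_constant_on_blocks_times_power_le[OF ME disj]) auto
    ultimately show ?thesis by simp
  qed
  then have "card {\<sigma>\<in>good E. constant_on_blocks \<sigma> M S} * q ^ ((k2 - 1) * card M) \<le> card (good F)"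
    using mult_le_mono1[OF restrict, of "q ^ ((k2 - 1) * card M)"] by linarith
  then have count: "real (card {\<sigma>\<in>good E. constant_on_blocks \<sigma> M S}) * (real q ^ (k2 - 1)) ^ card M
      \<le> real (card (good F))"
    by (simp add: mult.commute flip: power_mult of_nat_mult of_nat_power)
  have "real (card {\<sigma>\<in>good E. constant_on_blocks \<sigma> M S}) * ((1 - exp (-1)) * real q ^ (k2 - 1)) ^ card M
      = real (card {\<sigma>\<in>good E. constant_on_blocks \<sigma> M S}) * (real q ^ (k2 - 1)) ^ card M * (1 - exp (-1)) ^ card M"
    by (simp add: power_mult_distrib)
  also have "\<dots> \<le> real (card (good F)) * (1 - lll_x) ^ card G"
    using count loss by (intro mult_mono) auto
  also have "\<dots> \<le> real (card (good E))"
    using card_good_union_ge[of F G] \<open>F \<union> G = E\<close> by (simp add: F_def G_def mult.commute)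
  finally show ?thesis .
qed

end

section \<open>Counting connected sets\<close>

definition nbr_rel :: "('b \<Rightarrow> 'b set) \<Rightarrow> 'b set \<Rightarrow> ('b \<times> 'b) set" where
  "nbr_rel N T = {(a, b). a \<in> T \<and> b \<in> T \<and> b \<in> N a}"

definition connected_sets :: "('b \<Rightarrow> 'b set) \<Rightarrow> 'b \<Rightarrow> nat \<Rightarrow> 'b set set" where
  "connected_sets N r l = {T. r \<in> T \<and> finite T \<and> card T = l \<and> (\<forall>y\<in>T. (r, y) \<in> (nbr_rel N T)\<^sup>*)}"

lemma rtrancl_nbr_rel_leaves:
  assumes "S \<subseteq> T" and "r \<in> S" and "(r, y) \<in> (nbr_rel N T)\<^sup>*"
  shows "y \<in> S \<or> (\<exists>u\<in>S. \<exists>w\<in>T - S. w \<in> N u)"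
  using assms(3) by (induction rule: rtrancl_induct) (use assms(2) in \<open>auto simp: nbr_rel_def\<close>)

text \<open>A connected set is encoded by a depth-first walk from \<open>r\<close>: the code \<open>Some j\<close> moves to the
  \<open>j\<close>-th neighbour of the current vertex, \<open>None\<close> backtracks. The stack holds the current path.\<close>

fun dfs_stack :: "('b \<Rightarrow> nat \<Rightarrow> 'b) \<Rightarrow> 'b list \<Rightarrow> nat option list \<Rightarrow> 'b list" where
  "dfs_stack nb s [] = s"
| "dfs_stack nb s (None # ms) = dfs_stack nb (tl s) ms"
| "dfs_stack nb s (Some j # ms) = dfs_stack nb (nb (hd s) j # s) ms"

fun dfs_visited :: "('b \<Rightarrow> nat \<Rightarrow> 'b) \<Rightarrow> 'b list \<Rightarrow> nat option list \<Rightarrow> 'b set" where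
  "dfs_visited nb s [] = {}"
| "dfs_visited nb s (None # ms) = dfs_visited nb (tl s) ms"
| "dfs_visited nb s (Some j # ms) = insert (nb (hd s) j) (dfs_visited nb (nb (hd s) j # s) ms)"

lemma dfs_visited_append:
  "dfs_visited nb s (xs @ ys) = dfs_visited nb s xs \<union> dfs_visited nb (dfs_stack nb s xs) ys"
  by (induction nb s xs rule: dfs_visited.induct) auto

lemma dfs_visited_on_top:
  "x \<in> dfs_visited nb s ms \<Longrightarrow> \<exists>ms1 ms2. ms = ms1 @ ms2 \<and> hd (dfs_stack nb s ms1) = x"
proof (induction nb s ms rule: dfs_visited.induct)
  case (2 nb s ms)
  then obtain ms1 ms2 where "ms = ms1 @ ms2" "hd (dfs_stack nb (tl s) ms1) = x" by auto
  then show ?case by (intro exI[of _ "None # ms1"] exI[of _ ms2]) auto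
next
  case (3 nb s j ms)
  show ?case
  proof (cases "x = nb (hd s) j")
    case True
    then show ?thesis by (intro exI[of _ "[Some j]"] exI[of _ ms]) auto
  next
    case False
    then obtain ms1 ms2 where "ms = ms1 @ ms2" "hd (dfs_stack nb (nb (hd s) j # s) ms1) = x"
      using 3 by auto
    then show ?thesis by (intro exI[of _ "Some j # ms1"] exI[of _ ms2]) auto
  qed
qed simp

definition dfs_codes :: "nat \<Rightarrow> nat \<Rightarrow> nat \<Rightarrow> nat option list set" where
  "dfs_codes D n p = {ms. length ms = n \<and> length (filter (\<lambda>z. z \<noteq> None) ms) = p
                        \<and> (\<forall>j. Some j \<in> set ms \<longrightarrow> j < D)}"

lemma finite_dfs_codes: "finite (dfs_codes D n p)"
proof (rule finite_subset[OF _ finite_lists_length_eq[of "insert None (Some ` {..<D})" n]])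
  show "dfs_codes D n p \<subseteq> {xs. set xs \<subseteq> insert None (Some ` {..<D}) \<and> length xs = n}"
    unfolding dfs_codes_def by clarsimp (metis imageI lessThan_iff not_None_eq)
qed simp

lemma dfs_codes_Suc:
  "dfs_codes D (Suc n) p \<subseteq>
     Cons None ` dfs_codes D n p \<union> (\<Union>j<D. Cons (Some j) ` dfs_codes D n (p - 1))"
  "dfs_codes D (Suc n) 0 \<subseteq> Cons None ` dfs_codes D n 0"
proof -
  have "ms \<in> Cons None ` dfs_codes D n p \<union> (\<Union>j<D. Cons (Some j) ` dfs_codes D n (p - 1))
      \<and> (p = 0 \<longrightarrow> ms \<in> Cons None ` dfs_codes D n 0)"
    if code: "ms \<in> dfs_codes D (Suc n) p" for ms p
  proof -
    obtain z ms' where ms: "ms = z # ms'" using code unfolding dfs_codes_def by (cases ms) auto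
    show ?thesis
      using code unfolding ms dfs_codes_def by (cases z) (auto simp: image_iff)
  qed
  then show "dfs_codes D (Suc n) p \<subseteq>
      Cons None ` dfs_codes D n p \<union> (\<Union>j<D. Cons (Some j) ` dfs_codes D n (p - 1))"
    "dfs_codes D (Suc n) 0 \<subseteq> Cons None ` dfs_codes D n 0"
    by blast+
qed

lemma card_dfs_codes_le: "card (dfs_codes D n p) \<le> (n choose p) * D ^ p"
proof (induction n arbitrary: p)
  case 0
  have "dfs_codes D 0 p \<subseteq> (if p = 0 then {[]} else {})" unfolding dfs_codes_def by auto
  then show ?case by (cases "p = 0") (auto dest: card_mono[rotated])
next
  case (Suc n)
  show ?case
  proof (cases p)
    case 0
    have "card (dfs_codes D (Suc n) 0) \<le> card (Cons None ` dfs_codes D n 0)"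
      by (rule card_mono[OF _ dfs_codes_Suc(2)]) (simp add: finite_dfs_codes)
    also have "\<dots> \<le> 1"
      using Suc.IH[of 0] card_image_le[OF finite_dfs_codes] by (metis binomial_n_0 le_trans mult_1 power_0)
    finally show ?thesis using 0 by simp
  next
    case (Suc p')
    have "card (dfs_codes D (Suc n) p)
        \<le> card (Cons None ` dfs_codes D n p \<union> (\<Union>j<D. Cons (Some j) ` dfs_codes D n p'))"
      using dfs_codes_Suc(1)[of D n p] Suc by (intro card_mono) (auto simp: finite_dfs_codes)
    also have "\<dots> \<le> card (dfs_codes D n p) + (\<Sum>j<D. card (dfs_codes D n p'))"
      by (rule le_trans[OF card_Un_le add_mono[OF card_image_le le_trans[OF card_UN_le sum_mono]]])
         (auto simp: finite_dfs_codes card_image_le)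
    also have "\<dots> \<le> (n choose p) * D ^ p + D * ((n choose p') * D ^ p')"
      using Suc.IH[of p] Suc.IH[of p'] by (intro add_mono) auto
    also have "\<dots> = (Suc n choose p) * D ^ p" using Suc by (simp add: algebra_simps)
    finally show ?thesis .
  qed
qed


definition enumeration :: "'b set \<Rightarrow> nat \<Rightarrow> 'b" where
  "enumeration A = (SOME f. bij_betw f {..<card A} A)"

lemma enumeration_surj: "finite A \<Longrightarrow> w \<in> A \<Longrightarrow> \<exists>j<card A. enumeration A j = w"
proof -
  assume "finite A" "w \<in> A"
  have "\<exists>f. bij_betw f {..<card A} A"
    using ex_bij_betw_nat_finite[OF \<open>finite A\<close>] by (simp add: lessThan_atLeast0)
  then have "bij_betw (enumeration A) {..<card A} A" unfolding enumeration_def by (rule someI_ex)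
  then show ?thesis using \<open>w \<in> A\<close> unfolding bij_betw_def by force
qed

lemma connected_set_dfs_prefix:
  fixes N :: "'b \<Rightarrow> 'b set"
  assumes fin: "\<And>y. finite (N y)" and deg: "\<And>y. card (N y) \<le> D"
    and T: "T \<in> connected_sets N r l" and "i < l"
  shows "\<exists>S ms. r \<in> S \<and> S \<subseteq> T \<and> card S = Suc i \<and> ms \<in> dfs_codes D (2 * i) i
           \<and> insert r (dfs_visited (\<lambda>y. enumeration (N y)) [r] ms) = S"
  using \<open>i < l\<close>
proof (induction i)
  case 0
  show ?case using T by (intro exI[of _ "{r}"] exI[of _ "[]"]) (auto simp: dfs_codes_def connected_sets_def)
next
  case (Suc i)
  let ?nb = "\<lambda>y. enumeration (N y)"
  obtain S ms where S: "r \<in> S" "S \<subseteq> T" "card S = Suc i" "ms \<in> dfs_codes D (2 * i) i"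
      "insert r (dfs_visited ?nb [r] ms) = S"
    using Suc.IH[OF Suc_lessD[OF Suc.prems]] by blast
  have "S \<noteq> T" using S(3) Suc.prems T unfolding connected_sets_def by auto
  then obtain y where "y \<in> T" "y \<notin> S" using S(2) by blast
  then have "(r, y) \<in> (nbr_rel N T)\<^sup>*" using T unfolding connected_sets_def by blast
  then obtain u w where uw: "u \<in> S" "w \<in> T - S" "w \<in> N u"
    using rtrancl_nbr_rel_leaves[OF S(2,1)] \<open>y \<notin> S\<close> by blast
  text \<open>Splice a step to \<open>w\<close> and straight back into the walk at a moment when \<open>u\<close> is on top.\<close>
  obtain ms1 ms2 where ms12: "ms = ms1 @ ms2" "hd (dfs_stack ?nb [r] ms1) = u"
  proof (cases "u = r")
    case False
    then have "u \<in> dfs_visited ?nb [r] ms" using uw(1) S(5) by auto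
    then show ?thesis using dfs_visited_on_top[of u ?nb "[r]" ms] that by blast
  qed (use that[of "[]" ms] in simp)
  obtain j where j: "j < card (N u)" "enumeration (N u) j = w" using enumeration_surj[OF fin uw(3)] by blast
  define ms' where "ms' = ms1 @ Some j # None # ms2"
  have "insert r (dfs_visited ?nb [r] ms') = insert w S"
    using S(5) ms12 j(2) unfolding ms'_def by (auto simp: dfs_visited_append)
  moreover have "ms' \<in> dfs_codes D (2 * Suc i) (Suc i)"
    using S(4) j(1) deg[of u] unfolding ms'_def ms12(1) dfs_codes_def by auto
  moreover have "card (insert w S) = Suc (Suc i)"
    using S(3) uw(2) T finite_subset[OF S(2)] unfolding connected_sets_def by auto
  moreover have "r \<in> insert w S" "insert w S \<subseteq> T" using S uw by auto
  ultimately show ?case by blast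
qed

lemma connected_sets_subset_dfs_image:
  fixes N :: "'b \<Rightarrow> 'b set"
  assumes "\<And>y. finite (N y)" and "\<And>y. card (N y) \<le> D" and "1 \<le> l"
  shows "connected_sets N r l \<subseteq>
           (\<lambda>ms. insert r (dfs_visited (\<lambda>y. enumeration (N y)) [r] ms)) ` dfs_codes D (2 * (l - 1)) (l - 1)"
proof
  fix T assume T: "T \<in> connected_sets N r l"
  obtain S ms where S: "S \<subseteq> T" "card S = l" "ms \<in> dfs_codes D (2 * (l - 1)) (l - 1)"
      "insert r (dfs_visited (\<lambda>y. enumeration (N y)) [r] ms) = S"
    using connected_set_dfs_prefix[OF assms(1,2) T, of "l - 1"] \<open>1 \<le> l\<close> by auto
  have "S = T" using card_subset_eq[OF _ S(1)] S(2) T unfolding connected_sets_def by auto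
  then show "T \<in> (\<lambda>ms. insert r (dfs_visited (\<lambda>y. enumeration (N y)) [r] ms)) ` dfs_codes D (2 * (l - 1)) (l - 1)"
    using S by blast
qed

lemma
  fixes N :: "'b \<Rightarrow> 'b set"
  assumes "\<And>y. finite (N y)" and "\<And>y. card (N y) \<le> D" and "1 \<le> l"
  shows finite_connected_sets: "finite (connected_sets N r l)"
    and card_connected_sets_le: "card (connected_sets N r l) \<le> 4 ^ (l - 1) * D ^ (l - 1)"
proof -
  note sub = connected_sets_subset_dfs_image[OF assms]
  show "finite (connected_sets N r l)" by (rule finite_subset[OF sub finite_imageI[OF finite_dfs_codes]])
  have "card (connected_sets N r l) \<le> card (dfs_codes D (2 * (l - 1)) (l - 1))"
    using card_mono[OF finite_imageI[OF finite_dfs_codes] sub] card_image_le[OF finite_dfs_codes]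
    by (rule le_trans)
  also have "\<dots> \<le> (2 * (l - 1) choose (l - 1)) * D ^ (l - 1)" by (rule card_dfs_codes_le)
  also have "\<dots> \<le> 4 ^ (l - 1) * D ^ (l - 1)"
    using binomial_le_pow2[of "2 * (l - 1)" "l - 1"] by (simp add: power_mult)
  finally show "card (connected_sets N r l) \<le> 4 ^ (l - 1) * D ^ (l - 1)" .
qed

section \<open>Trees in the line graph\<close>

context pinned_hypergraph
begin

lemma lin_walk_in_E: "lin_walk E vert n e f \<Longrightarrow> f \<in> E"
  by (induction rule: lin_walk.induct) (auto simp: lin_adj_def)

lemma card_lin_adj_le: "card {g. lin_adj E vert e g} \<le> k * (\<Delta> - 1)"
proof (cases "e \<in> E")
  case True
  have "card {g. lin_adj E vert e g} \<le> card (\<Union>u\<in>vert e. {g\<in>E. u \<in> vert g} - {e})"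
    using finite_E finite_vert[OF True] by (intro card_mono) (auto simp: lin_adj_def)
  also have "\<dots> \<le> (\<Sum>u\<in>vert e. card ({g\<in>E. u \<in> vert g} - {e}))"
    by (rule card_UN_le[OF finite_vert[OF True]])
  also have "\<dots> \<le> (\<Sum>u\<in>vert e. \<Delta> - 1)"
  proof (rule sum_mono)
    fix u assume "u \<in> vert e"
    then have "card {g\<in>E. u \<in> vert g} \<le> \<Delta>"
      using degree_le vert_subset True by (auto simp: degree_def)
    then show "card ({g\<in>E. u \<in> vert g} - {e}) \<le> \<Delta> - 1"
      using \<open>u \<in> vert e\<close> True finite_E by (subst card_Diff_singleton) auto
  qed
  also have "\<dots> \<le> k * (\<Delta> - 1)" using edge_card True by simp
  finally show ?thesis .
qed (simp add: lin_adj_def)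

lemma finite_lin_walk: "finite {y. lin_walk E vert n z y}"
  using lin_walk_in_E finite_E by (auto intro: finite_subset)

lemma card_lin_walk_le: "card {y. lin_walk E vert n z y} \<le> (k * (\<Delta> - 1)) ^ n"
proof (induction n)
  case 0
  have "{y. lin_walk E vert 0 z y} \<subseteq> {z}" by (auto elim: lin_walk.cases)
  then have "card {y. lin_walk E vert 0 z y} \<le> card {z}" by (intro card_mono) auto
  then show ?case by simp
next
  case (Suc n)
  note fin = finite_lin_walk[of n z]
  have "{y. lin_walk E vert (Suc n) z y} \<subseteq> (\<Union>g\<in>{y. lin_walk E vert n z y}. {f. lin_adj E vert g f})"
    by (auto elim: lin_walk.cases)
  then have "card {y. lin_walk E vert (Suc n) z y} \<le> card (\<Union>g\<in>{y. lin_walk E vert n z y}. {f. lin_adj E vert g f})"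
    using fin finite_E by (intro card_mono) (auto simp: lin_adj_def intro: finite_subset)
  also have "\<dots> \<le> (\<Sum>g\<in>{y. lin_walk E vert n z y}. card {f. lin_adj E vert g f})"
    by (rule card_UN_le[OF fin])
  also have "\<dots> \<le> card {y. lin_walk E vert n z y} * (k * (\<Delta> - 1))"
    using sum_mono[OF card_lin_adj_le] by simp
  also have "\<dots> \<le> (k * (\<Delta> - 1)) ^ Suc n" using Suc.IH by (simp add: mult.commute)
  finally show ?case .
qed

definition tree_nbrs :: "'b \<Rightarrow> 'b set" where
  "tree_nbrs z = {y\<in>E. lin_dist_le E vert 3 z y \<and> \<not> lin_dist_le E vert 1 z y}"

lemma finite_tree_nbrs: "finite (tree_nbrs z)"
  unfolding tree_nbrs_def using finite_E by simp

lemma card_tree_nbrs_le: "card (tree_nbrs z) \<le> (k * \<Delta>) ^ 3"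
proof -
  define d where "d = k * (\<Delta> - 1)"
  have "tree_nbrs z \<subseteq> {y. lin_walk E vert 2 z y} \<union> {y. lin_walk E vert 3 z y}"
  proof
    fix y assume "y \<in> tree_nbrs z"
    then obtain m where "m \<le> 3" "lin_walk E vert m z y" "\<not> lin_walk E vert 0 z y" "\<not> lin_walk E vert 1 z y"
      unfolding tree_nbrs_def lin_dist_le_def by auto
    then have "m = 2 \<or> m = 3" by (metis le_SucE numeral_3_eq_3 numeral_2_eq_2 One_nat_def le_zero_eq)
    then show "y \<in> {y. lin_walk E vert 2 z y} \<union> {y. lin_walk E vert 3 z y}"
      using \<open>lin_walk E vert m z y\<close> by auto
  qed
  then have "card (tree_nbrs z) \<le> card {y. lin_walk E vert 2 z y} + card {y. lin_walk E vert 3 z y}"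
    using finite_lin_walk by (intro le_trans[OF card_mono card_Un_le]) auto
  also have "\<dots> \<le> d ^ 2 * (d + 1)"
    using card_lin_walk_le[of 2 z, folded d_def] card_lin_walk_le[of 3 z, folded d_def]
    by (simp add: algebra_simps power2_eq_square power3_eq_cube)
  also have "\<dots> \<le> (k * \<Delta>) ^ 3"
  proof -
    have "1 \<le> k" "1 \<le> \<Delta>" using k\<Delta>_pos by (auto simp: Suc_le_eq)
    then have "k \<le> k * \<Delta>" by simp
    then have "d + 1 \<le> k * \<Delta>"
      unfolding d_def diff_mult_distrib2 mult_1_right using \<open>1 \<le> k\<close> by arith
    then have "d ^ 2 * (d + 1) \<le> (k * \<Delta>) ^ 2 * (k * \<Delta>)"
      by (intro mult_le_mono power_mono) auto
    then show ?thesis by (simp add: power3_eq_cube power2_eq_square)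
  qed
  finally show ?thesis .
qed

abbreviation trees :: "'b \<Rightarrow> nat \<Rightarrow> 'b set set" where
  "trees r l \<equiv> {T. tree23 E vert T \<and> card T = l \<and> r \<in> T}"

lemma tree23_subset_E: "tree23 E vert T \<Longrightarrow> T \<subseteq> E"
  unfolding tree23_def by blast

lemma finite_trees: "finite (trees r l)"
proof -
  have "trees r l \<subseteq> Pow E" using tree23_subset_E by blast
  then show ?thesis using finite_E by (simp add: finite_subset)
qed

lemma trees_subset_connected_sets: "trees r l \<subseteq> connected_sets tree_nbrs r l"
proof
  fix T assume "T \<in> trees r l"
  then have T: "tree23 E vert T" "card T = l" "r \<in> T" by auto
  then have "T \<subseteq> E" unfolding tree23_def by blast
  then have "finite T" using finite_E finite_subset by blast
  have "{(x, y). x \<in> T \<and> y \<in> T \<and> x \<noteq> y \<and> lin_dist_le E vert 3 x y \<and> \<not> lin_dist_le E vert 1 x y}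
      \<subseteq> nbr_rel tree_nbrs T"
    using \<open>T \<subseteq> E\<close> unfolding nbr_rel_def tree_nbrs_def by auto
  then have "\<forall>y\<in>T. (r, y) \<in> (nbr_rel tree_nbrs T)\<^sup>*"
    using T(1,3) rtrancl_mono unfolding tree23_def by blast
  then show "T \<in> connected_sets tree_nbrs r l"
    using T \<open>finite T\<close> unfolding connected_sets_def by blast
qed

lemma card_trees_le:
  assumes "1 \<le> l"
  shows "real (card (trees r l)) \<le> 4 ^ (l - 1) * (real k * real \<Delta>) ^ (3 * (l - 1))"
proof -
  have "card (trees r l) \<le> card (connected_sets tree_nbrs r l)"
    by (rule card_mono[OF finite_connected_sets[OF finite_tree_nbrs card_tree_nbrs_le assms]
          trees_subset_connected_sets])
  also have "\<dots> \<le> 4 ^ (l - 1) * ((k * \<Delta>) ^ 3) ^ (l - 1)"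
    by (rule card_connected_sets_le[OF finite_tree_nbrs card_tree_nbrs_le assms])
  finally have "real (card (trees r l)) \<le> real (4 ^ (l - 1) * ((k * \<Delta>) ^ 3) ^ (l - 1))"
    by (rule of_nat_mono)
  then show ?thesis by (simp add: power_mult)
qed

lemma tree23_disjoint:
  assumes "tree23 E vert T" "e \<in> T" "f \<in> T" "e \<noteq> f"
  shows "vert e \<inter> vert f = {}"
proof (rule ccontr)
  assume "vert e \<inter> vert f \<noteq> {}"
  moreover have "e \<in> E" "f \<in> E" using assms unfolding tree23_def by blast+
  ultimately have "lin_adj E vert e f" using assms(4) by (simp add: lin_adj_def)
  then have "lin_walk E vert 1 e f" using walkS[OF walk0[OF \<open>e \<in> E\<close>]] by simp
  then show False using assms unfolding tree23_def lin_dist_le_def by blast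
qed

end

section \<open>The union bound\<close>

definition block_choices :: "('b \<Rightarrow> 'a set) \<Rightarrow> nat \<Rightarrow> 'b set \<Rightarrow> nat \<Rightarrow> ('b set \<times> ('b \<Rightarrow> 'a set)) set" where
  "block_choices vert k2 T m =
     (SIGMA M:{M. M \<subseteq> T \<and> card M = m}. Pi\<^sub>E M (\<lambda>e. {A. A \<subseteq> vert e \<and> card A = k2}))"

lemma
  assumes "finite T" and "\<forall>e\<in>T. finite (vert e) \<and> card (vert e) \<le> k"
  shows finite_block_choices: "finite (block_choices vert k2 T m)"
    and card_block_choices_le: "card (block_choices vert k2 T m) \<le> (card T choose m) * (k choose k2) ^ m"
proof -
  have fin: "finite (Pi\<^sub>E M (\<lambda>e. {A. A \<subseteq> vert e \<and> card A = k2}))" if "M \<subseteq> T" for M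
    using that assms finite_subset by (intro finite_PiE) auto
  show "finite (block_choices vert k2 T m)"
    unfolding block_choices_def using assms(1) fin by (intro finite_SigmaI) auto
  have "card (Pi\<^sub>E M (\<lambda>e. {A. A \<subseteq> vert e \<and> card A = k2})) \<le> (k choose k2) ^ m"
    if "M \<subseteq> T" "card M = m" for M
  proof -
    have "card {A. A \<subseteq> vert e \<and> card A = k2} = card (vert e) choose k2" if "e \<in> M" for e
      using n_subsets \<open>M \<subseteq> T\<close> that assms(2) by blast
    then have "card (Pi\<^sub>E M (\<lambda>e. {A. A \<subseteq> vert e \<and> card A = k2})) = (\<Prod>e\<in>M. card (vert e) choose k2)"
      using that assms(1) finite_subset by (subst card_PiE) auto
    also have "\<dots> \<le> (\<Prod>e\<in>M. k choose k2)"
      using that assms by (intro prod_mono) (auto intro: binomial_right_mono)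
    finally show ?thesis using that by simp
  qed
  note bound = this
  have "card (block_choices vert k2 T m)
      = (\<Sum>M\<in>{M. M \<subseteq> T \<and> card M = m}. card (Pi\<^sub>E M (\<lambda>e. {A. A \<subseteq> vert e \<and> card A = k2})))"
    unfolding block_choices_def using assms(1) fin by (intro card_SigmaI) auto
  also have "\<dots> \<le> (\<Sum>M\<in>{M. M \<subseteq> T \<and> card M = m}. (k choose k2) ^ m)"
    by (rule sum_mono) (simp add: bound)
  also have "\<dots> = (card T choose m) * (k choose k2) ^ m"
    using n_subsets[OF assms(1)] by simp
  finally show "card (block_choices vert k2 T m) \<le> (card T choose m) * (k choose k2) ^ m" .
qed

context pinned_hypergraph
begin

lemma bad_has_constant_blocks:
  assumes "is_bad E vert e0 k2 \<beta> l \<sigma>" and m: "m = nat \<lceil>\<beta> * real l\<rceil>"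
  shows "\<exists>T. tree23 E vert T \<and> card T = l \<and> e0 \<in> T \<and>
           (\<exists>(M, S)\<in>block_choices vert k2 T m. constant_on_blocks \<sigma> M S)"
proof -
  obtain T Vcol where T: "tree23 E vert T" "card T = l" "e0 \<in> T"
    and Vcol: "\<forall>e\<in>T. card (vert e \<inter> Vcol) = k2"
    and many: "\<beta> * real l \<le> real (card {e\<in>T. partially_mono vert Vcol \<sigma> e})"
    using assms(1) unfolding is_bad_def by blast
  have "m \<le> card {e\<in>T. partially_mono vert Vcol \<sigma> e}" using many m by linarith
  then obtain M where M: "M \<subseteq> {e\<in>T. partially_mono vert Vcol \<sigma> e}" "card M = m"
    by (rule obtain_subset_with_card_n)
  define S where "S = restrict (\<lambda>e. vert e \<inter> Vcol) M"
  have "(M, S) \<in> block_choices vert k2 T m"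
    using M Vcol unfolding block_choices_def S_def by auto
  moreover have "constant_on_blocks \<sigma> M S"
    using M unfolding constant_on_blocks_def partially_mono_def S_def by fastforce
  ultimately show ?thesis using T by blast
qed

lemma card_constant_on_blocks_le_divide:
  assumes "M \<subseteq> E" and "\<forall>e\<in>M. \<forall>f\<in>M. e \<noteq> f \<longrightarrow> vert e \<inter> vert f = {}"
    and "\<forall>e\<in>M. S e \<subseteq> vert e \<and> card (S e) = k2" and "1 \<le> k2" "k2 \<le> k"
  shows "real (card {\<sigma>\<in>good E. constant_on_blocks \<sigma> M S})
           \<le> real (card (good E)) / ((1 - exp (-1)) * real q ^ (k2 - 1)) ^ card M"
proof -
  have "0 < (1 - exp (-1)) * real q ^ (k2 - 1)" using q_pos by simp
  then show ?thesis using card_constant_on_blocks_le[OF assms] by (simp add: pos_le_divide_eq)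
qed


lemma card_bad_le_sum:
  assumes "m = nat \<lceil>\<beta> * real l\<rceil>"
  shows "card {\<sigma>\<in>good E. is_bad E vert e0 k2 \<beta> l \<sigma>}
     \<le> (\<Sum>T\<in>trees e0 l. \<Sum>(M, S)\<in>block_choices vert k2 T m. card {\<sigma>\<in>good E. constant_on_blocks \<sigma> M S})"
proof -
  let ?Ev = "\<lambda>(M, S). {\<sigma>\<in>good E. constant_on_blocks \<sigma> M S}"
  have "{\<sigma>\<in>good E. is_bad E vert e0 k2 \<beta> l \<sigma>} \<subseteq> (\<Union>T\<in>trees e0 l. \<Union>i\<in>block_choices vert k2 T m. ?Ev i)"
  proof
    fix \<sigma> assume "\<sigma> \<in> {\<sigma>\<in>good E. is_bad E vert e0 k2 \<beta> l \<sigma>}"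
    then obtain T M S where "T \<in> trees e0 l" "(M, S) \<in> block_choices vert k2 T m"
      "\<sigma> \<in> good E" "constant_on_blocks \<sigma> M S"
      using bad_has_constant_blocks[OF _ assms] by blast
    then show "\<sigma> \<in> (\<Union>T\<in>trees e0 l. \<Union>i\<in>block_choices vert k2 T m. ?Ev i)" by blast
  qed
  then have "card {\<sigma>\<in>good E. is_bad E vert e0 k2 \<beta> l \<sigma>} \<le> card (\<Union>T\<in>trees e0 l. \<Union>i\<in>block_choices vert k2 T m. ?Ev i)"
    by (rule card_mono[rotated]) (auto intro: finite_subset[OF _ finite_good])
  also have "\<dots> \<le> (\<Sum>T\<in>trees e0 l. card (\<Union>i\<in>block_choices vert k2 T m. ?Ev i))"
    by (rule card_UN_le[OF finite_trees])
  also have "\<dots> \<le> (\<Sum>T\<in>trees e0 l. \<Sum>i\<in>block_choices vert k2 T m. card (?Ev i))"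
  proof (rule sum_mono, rule card_UN_le, rule finite_block_choices)
    fix T assume "T \<in> trees e0 l"
    then have "T \<subseteq> E" by (simp add: tree23_subset_E)
    then show "finite T" "\<forall>e\<in>T. finite (vert e) \<and> card (vert e) \<le> k"
      using finite_E edge_card finite_vert by (auto intro: finite_subset)
  qed
  finally show ?thesis by (simp only: prod.case_distrib)
qed

lemma card_bad_le:
  assumes k2: "1 \<le> k2" "k2 \<le> k" and m: "m = nat \<lceil>\<beta> * real l\<rceil>"
  shows "real (card {\<sigma>\<in>good E. is_bad E vert e0 k2 \<beta> l \<sigma>})
     \<le> real (card (trees e0 l) * (l choose m) * (k choose k2) ^ m)
        * (real (card (good E)) / ((1 - exp (-1)) * real q ^ (k2 - 1)) ^ m)"
    (is "_ \<le> _ * ?p")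
proof -
  let ?c = "(l choose m) * (k choose k2) ^ m"
  have "0 \<le> ?p" using q_pos by simp
  have "(\<Sum>(M, S)\<in>block_choices vert k2 T m. real (card {\<sigma>\<in>good E. constant_on_blocks \<sigma> M S})) \<le> real ?c * ?p"
    if T: "T \<in> trees e0 l" for T
  proof -
    have "T \<subseteq> E" "card T = l" using T tree23_subset_E by auto
    then have edges: "finite T" "\<forall>e\<in>T. finite (vert e) \<and> card (vert e) \<le> k"
      using finite_E edge_card finite_vert by (auto intro: finite_subset)
    have "real (card {\<sigma>\<in>good E. constant_on_blocks \<sigma> M S}) \<le> ?p"
      if "(M, S) \<in> block_choices vert k2 T m" for M S
    proof -
      have M: "M \<subseteq> T" "card M = m" "\<forall>e\<in>M. S e \<subseteq> vert e \<and> card (S e) = k2"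
        using that unfolding block_choices_def by auto
      have "\<forall>e\<in>M. \<forall>f\<in>M. e \<noteq> f \<longrightarrow> vert e \<inter> vert f = {}"
        using tree23_disjoint[of T] T M(1) by blast
      then show ?thesis
        using card_constant_on_blocks_le_divide[of M S] M \<open>T \<subseteq> E\<close> k2 by auto
    qed
    then have "(\<Sum>(M, S)\<in>block_choices vert k2 T m. real (card {\<sigma>\<in>good E. constant_on_blocks \<sigma> M S}))
        \<le> real (card (block_choices vert k2 T m)) * ?p"
      by (intro sum_bounded_above) auto
    also have "\<dots> \<le> real ?c * ?p"
      using card_block_choices_le[OF edges, of k2 m] \<open>card T = l\<close> \<open>0 \<le> ?p\<close>
      by (intro mult_right_mono) (simp_all only: of_nat_le_iff)
    finally show ?thesis .
  qed
  then have "(\<Sum>T\<in>trees e0 l. \<Sum>(M, S)\<in>block_choices vert k2 T m. real (card {\<sigma>\<in>good E. constant_on_blocks \<sigma> M S}))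
      \<le> (\<Sum>T\<in>trees e0 l. real ?c * ?p)"
    by (rule sum_mono)
  moreover have "real (card {\<sigma>\<in>good E. is_bad E vert e0 k2 \<beta> l \<sigma>})
      \<le> (\<Sum>T\<in>trees e0 l. \<Sum>(M, S)\<in>block_choices vert k2 T m. real (card {\<sigma>\<in>good E. constant_on_blocks \<sigma> M S}))"
    using card_bad_le_sum[OF m] by (simp add: case_prod_beta flip: of_nat_sum)
  ultimately have "real (card {\<sigma>\<in>good E. is_bad E vert e0 k2 \<beta> l \<sigma>}) \<le> (\<Sum>T\<in>trees e0 l. real ?c * ?p)"
    by (rule order.trans[rotated])
  then show ?thesis by (simp only: sum_constant of_nat_mult mult.assoc)
qed

end

lemma (in pinned_hypergraph) bad_fraction_le:
  assumes "1 \<le> k2" "k2 \<le> k" "m = nat \<lceil>\<beta> * real l\<rceil>"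
  shows "real (card {\<sigma>\<in>good E. is_bad E vert e0 k2 \<beta> l \<sigma>}) / real (card (good E))
     \<le> real (card (trees e0 l)) * real (l choose m)
        * (real (k choose k2) / ((1 - exp (-1)) * real q ^ (k2 - 1))) ^ m"
proof (cases "card (good E) = 0")
  case False
  then show ?thesis
    using card_bad_le[OF assms] by (simp add: divide_le_eq power_divide ac_simps)
qed simp

section \<open>Numerical estimates\<close>

lemma power_div_fact_le_exp: "0 \<le> x \<Longrightarrow> x ^ n / fact n \<le> exp (x::real)"
  using sum_le_suminf[OF summable_exp_generic[of x], of "{n}"] by (auto simp: exp_def divide_inverse ac_simps)

lemma exp_two_minus_exp_ge_four: "4 \<le> exp 2 - exp (1::real)"
proof -
  have "1 + 1/2 + (1/2)\<^sup>2 / 2 \<le> exp (1/2::real)" by (rule exp_lower_Taylor_quadratic) simp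
  then have "13/8 \<le> exp (1/2::real)" by (simp add: power2_eq_square)
  then have "169/64 \<le> exp (1/2::real) * exp (1/2)" using mult_mono[of "13/8" _ "13/8"] by fastforce
  then have "169/64 \<le> exp (1::real)" by (simp flip: exp_add)
  moreover have "exp 2 - exp 1 = exp 1 * (exp 1 - 1::real)" by (simp add: algebra_simps flip: exp_add)
  ultimately show ?thesis using mult_mono[of "169/64" "exp 1" "105/64" "exp 1 - 1::real"] by simp
qed

lemma binomial_le_exp_ratio_power:
  assumes "0 < m"
  shows "real (l choose m) \<le> (exp 1 * real l / real m) ^ m"
proof -
  have "real m ^ m \<le> exp 1 ^ m * fact m"
    using power_div_fact_le_exp[of "real m" m] by (simp add: divide_le_eq flip: exp_of_nat_mult)
  then have "real (l choose m) * real m ^ m \<le> real (l choose m) * (exp 1 ^ m * fact m)"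
    by (rule mult_left_mono) simp
  also have "\<dots> = (real (l choose m) * fact m) * exp 1 ^ m" by (simp add: ac_simps)
  also have "\<dots> \<le> real l ^ m * exp 1 ^ m"
    using binomial_fact_pow[of l m] by (intro mult_right_mono) (metis of_nat_fact of_nat_le_iff of_nat_mult of_nat_power, simp)
  finally show ?thesis using assms by (simp add: power_divide power_mult_distrib pos_le_divide_eq mult.commute)
qed

lemma block_ratio_powr_lt:
  fixes \<beta> b K Q :: real
  assumes \<beta>: "0 < \<beta>" "\<beta> < 1" and "1 \<le> b" "1 \<le> K" "0 < Q"
    and hQ: "exp (\<beta> + 3) * K ^ 3 * b / \<beta> powr \<beta> < Q powr \<beta>"
  shows "(exp 1 * b / (\<beta> * ((1 - exp (-1)) * Q))) powr \<beta> < exp (-3) / ((1 - exp (-1)) * K ^ 3)"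
proof -
  define c where "c = 1 - exp (-1::real)"
  have c: "0 < c" "c \<le> 1" unfolding c_def by auto
  have "\<beta> powr \<beta> * Q powr \<beta> > exp (\<beta> + 3) * K ^ 3 * b"
    using hQ \<beta> by (simp add: divide_less_eq mult.commute)
  then have "exp \<beta> * b powr \<beta> / (\<beta> powr \<beta> * Q powr \<beta> * c powr \<beta>)
      < exp \<beta> * b powr \<beta> / (exp (\<beta> + 3) * K ^ 3 * b * c powr \<beta>)"
    using c \<beta> \<open>1 \<le> b\<close> \<open>1 \<le> K\<close> \<open>0 < Q\<close>
    by (intro divide_strict_left_mono mult_strict_right_mono) auto
  also have "\<dots> = (b powr \<beta> / b) * (exp (-3) / (c powr \<beta> * K ^ 3))"
    using \<open>1 \<le> b\<close> by (simp add: exp_add exp_minus field_simps)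
  also have "\<dots> \<le> 1 * (exp (-3) / (c * K ^ 3))"
  proof (rule mult_mono)
    show "b powr \<beta> / b \<le> 1"
      using powr_mono[of \<beta> 1 b] \<beta> \<open>1 \<le> b\<close> by simp
    show "exp (-3) / (c powr \<beta> * K ^ 3) \<le> exp (-3) / (c * K ^ 3)"
      using powr_mono'[of \<beta> 1 c] \<beta> c \<open>1 \<le> K\<close> by (intro divide_left_mono mult_right_mono) auto
  qed (use c \<open>1 \<le> K\<close> in auto)
  also have "exp \<beta> * b powr \<beta> / (\<beta> powr \<beta> * Q powr \<beta> * c powr \<beta>)
      = (exp 1 * b / (\<beta> * (c * Q))) powr \<beta>"
    using \<beta> \<open>1 \<le> b\<close> \<open>0 < Q\<close> c by (simp add: powr_divide powr_mult exp_powr_real ac_simps)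
  finally show ?thesis unfolding c_def by simp
qed

lemma binomial_times_power_le:
  fixes \<beta> Y :: real
  assumes "0 < \<beta>" "0 < Y" "0 < m" "\<beta> * real l \<le> real m" and Z: "exp 1 * Y / \<beta> \<le> 1"
  shows "real (l choose m) * Y ^ m \<le> ((exp 1 * Y / \<beta>) powr \<beta>) ^ l"
proof -
  define Z where "Z = exp 1 * Y / \<beta>"
  have "0 < Z" unfolding Z_def using assms by simp
  have "real l / real m \<le> 1 / \<beta>" using assms by (simp add: field_simps mult.commute)
  have "real (l choose m) * Y ^ m \<le> (exp 1 * real l / real m) ^ m * Y ^ m"
    using binomial_le_exp_ratio_power[OF \<open>0 < m\<close>, of l] \<open>0 < Y\<close> by (intro mult_right_mono) auto
  also have "\<dots> = (exp 1 * Y * (real l / real m)) ^ m" by (simp add: power_mult_distrib field_simps)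
  also have "\<dots> \<le> Z ^ m"
    using \<open>real l / real m \<le> 1 / \<beta>\<close> \<open>0 < Y\<close> unfolding Z_def
    by (intro power_mono) (auto simp: mult_left_mono divide_inverse)
  also have "\<dots> = Z powr real m" using \<open>0 < Z\<close> by (simp add: powr_realpow)
  also have "\<dots> \<le> Z powr (\<beta> * real l)"
    using assms \<open>0 < Z\<close> Z unfolding Z_def by (intro powr_mono') auto
  also have "\<dots> = (Z powr \<beta>) ^ l" using \<open>0 < Z\<close> by (simp add: powr_powr[symmetric] powr_realpow)
  finally show ?thesis unfolding Z_def .
qed

text \<open>The union bound is at most (4 K^3 U)^(l-1) U, where 4 K^3 comes from counting trees and
  U = e^(-3) / ((1 - 1/e) K^3) bounds the gain per tree edge.\<close>

lemma tree_growth_le: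
  fixes K :: real
  assumes "1 \<le> K"
  shows "4 * K ^ 3 * (exp (-3) / ((1 - exp (-1)) * K ^ 3)) \<le> exp (-1)"
    and "exp (-3) / ((1 - exp (-1)) * K ^ 3) \<le> exp (-1)"
proof -
  have "4 * exp (-3) \<le> exp (-3) * (exp 2 - exp (1::real))"
    using exp_two_minus_exp_ge_four by simp
  also have "\<dots> = exp (-1) * (1 - exp (-1))" by (simp add: algebra_simps flip: exp_add)
  finally have "4 * exp (-3) / (1 - exp (-1)) \<le> exp (-1::real)" by (simp add: divide_le_eq)
  then show "4 * K ^ 3 * (exp (-3) / ((1 - exp (-1)) * K ^ 3)) \<le> exp (-1)" using assms by simp
  moreover have "1 \<le> 4 * K ^ 3" using assms one_le_power[of K 3] by linarith
  then have "exp (-3) / ((1 - exp (-1)) * K ^ 3) \<le> 4 * K ^ 3 * (exp (-3) / ((1 - exp (-1)) * K ^ 3))"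
    using assms mult_right_mono[of 1 "4 * K ^ 3" "exp (-3) / ((1 - exp (-1)) * K ^ 3)"] by simp
  ultimately show "exp (-3) / ((1 - exp (-1)) * K ^ 3) \<le> exp (-1)" by linarith
qed

lemma union_bound_le_exp:
  fixes \<beta> b K Q :: real and l m NT :: nat
  assumes \<beta>: "0 < \<beta>" "\<beta> < 1" and "1 \<le> b" "1 \<le> K" "0 < Q"
    and hQ: "exp (\<beta> + 3) * K ^ 3 * b / \<beta> powr \<beta> < Q powr \<beta>"
    and "1 \<le> l" and m: "m = nat \<lceil>\<beta> * real l\<rceil>"
    and NT: "real NT \<le> 4 ^ (l - 1) * K ^ (3 * (l - 1))"
  shows "real NT * real (l choose m) * (b / ((1 - exp (-1)) * Q)) ^ m \<le> exp (- real l)"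
proof -
  have "0 < m" using \<beta>(1) \<open>1 \<le> l\<close> m by simp
  have "\<beta> * real l \<le> real m" unfolding m by (rule real_nat_ceiling_ge)
  define Y where "Y = b / ((1 - exp (-1)) * Q)"
  define U where "U = exp (-3) / ((1 - exp (-1)) * K ^ 3)"
  have "0 < Y" "0 < U" unfolding Y_def U_def using assms by auto
  note U_le = tree_growth_le[OF \<open>1 \<le> K\<close>, folded U_def]
  have "exp 1 * Y / \<beta> = exp 1 * b / (\<beta> * ((1 - exp (-1)) * Q))" unfolding Y_def by simp
  then have ratio: "(exp 1 * Y / \<beta>) powr \<beta> < U"
    using block_ratio_powr_lt[OF assms(1-6)] unfolding U_def by simp
  have "exp 1 * Y / \<beta> \<le> 1"
  proof (rule ccontr)
    assume "\<not> exp 1 * Y / \<beta> \<le> 1"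
    then have "1 \<le> (exp 1 * Y / \<beta>) powr \<beta>" using \<beta> by (simp add: ge_one_powr_ge_zero)
    moreover have "exp (-1) < (1::real)" by simp
    ultimately show False using ratio U_le(2) by linarith
  qed
  have "real (l choose m) * Y ^ m \<le> U ^ l"
    using binomial_times_power_le[OF \<beta>(1) \<open>0 < Y\<close> \<open>0 < m\<close> \<open>\<beta> * real l \<le> real m\<close> \<open>exp 1 * Y / \<beta> \<le> 1\<close>]
      power_mono[OF less_imp_le[OF ratio] powr_ge_zero, of l] by linarith
  then have "real NT * real (l choose m) * Y ^ m \<le> (4 ^ (l - 1) * K ^ (3 * (l - 1))) * U ^ l"
    using NT \<open>0 < Y\<close> \<open>1 \<le> K\<close> unfolding mult.assoc[of "real NT"] by (intro mult_mono) auto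
  also have "\<dots> = (4 * K ^ 3 * U) ^ (l - 1) * U"
    using \<open>1 \<le> l\<close> by (cases l) (auto simp: power_mult_distrib power_mult)
  also have "\<dots> \<le> exp (-1) ^ (l - 1) * exp (-1)"
    using U_le \<open>0 < U\<close> \<open>1 \<le> K\<close>
    by (intro mult_mono power_mono) auto
  also have "\<dots> = exp (- real l)"
    using \<open>1 \<le> l\<close> by (cases l) (auto simp flip: exp_of_nat_mult exp_add)
  finally show ?thesis unfolding Y_def .
qed

lemma local_lemma_condition_of_degree_bound:
  fixes k \<Delta> k1 q :: nat
  assumes "2 \<le> k1" "2 \<le> q" "exp 1 * real k * real \<Delta> < real q ^ (k1 - 2)"
  shows "2 * real k * real \<Delta> / real q ^ (k1 - 1) \<le> exp (-1)"
proof -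
  have "k1 - 1 = Suc (k1 - 2)" using assms(1) by simp
  then have "real q ^ (k1 - 1) = real q * real q ^ (k1 - 2)" by simp
  also have "\<dots> \<ge> 2 * (exp 1 * real k * real \<Delta>)"
    using assms(2,3) by (intro mult_mono) auto
  finally have "2 * real k * real \<Delta> \<le> exp (-1) * real q ^ (k1 - 1)"
    by (simp add: exp_minus field_simps)
  then show ?thesis using assms(2) by (simp add: divide_le_eq mult.commute)
qed

lemma exp_cube_div_powr_gt_one:
  fixes \<beta> :: real
  assumes "0 < \<beta>" "\<beta> < 1" "1 \<le> k" "k2 \<le> k"
  shows "1 < exp (\<beta> + 3) * real k ^ 3 / \<beta> powr \<beta> * real (k choose k2)"
proof -
  have "\<beta> powr \<beta> \<le> 1" using assms(1,2) by (intro powr_le1) auto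
  moreover have "1 < exp (\<beta> + 3)" "1 \<le> real k ^ 3" "1 \<le> real (k choose k2)"
    using assms by (auto simp: Suc_le_eq)
  moreover from this(2,3) have "1 \<le> real k ^ 3 * real (k choose k2)"
    using mult_mono[of 1 "real k ^ 3" 1 "real (k choose k2)"] by simp
  ultimately have "1 < exp (\<beta> + 3) * (real k ^ 3 * real (k choose k2))"
    using mult_left_mono[of 1 "real k ^ 3 * real (k choose k2)" "exp (\<beta> + 3)"] by linarith
  also have "\<dots> \<le> exp (\<beta> + 3) * (real k ^ 3 * real (k choose k2)) / \<beta> powr \<beta>"
    using divide_left_mono[OF \<open>\<beta> powr \<beta> \<le> 1\<close>, of "exp (\<beta> + 3) * (real k ^ 3 * real (k choose k2))"]
      assms(1) by simp
  finally show ?thesis by simp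
qed

lemma block_condition_of_colour_bound:
  fixes \<beta> C :: real and q k k2 \<Delta> :: nat
  assumes "0 < \<beta>" "2 \<le> k2" "0 < \<Delta>" "0 < C"
    and hC: "exp (\<beta> + 3) * real k ^ 3 / \<beta> powr \<beta> * real (k choose k2) \<le> C powr (\<beta> * (real k2 - 1))"
    and hq: "C * real \<Delta> powr (3 / (\<beta> * (real k2 - 1))) < real q"
  shows "exp (\<beta> + 3) * (real k * real \<Delta>) ^ 3 * real (k choose k2) / \<beta> powr \<beta> < (real q ^ (k2 - 1)) powr \<beta>"
proof -
  define t where "t = \<beta> * (real k2 - 1)"
  have "0 < t" unfolding t_def using assms(1,2) by simp
  have "exp (\<beta> + 3) * (real k * real \<Delta>) ^ 3 * real (k choose k2) / \<beta> powr \<beta>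
      = exp (\<beta> + 3) * real k ^ 3 / \<beta> powr \<beta> * real (k choose k2) * real \<Delta> ^ 3"
    by (simp add: power_mult_distrib)
  also have "\<dots> \<le> C powr t * real \<Delta> ^ 3" unfolding t_def by (rule mult_right_mono[OF hC]) simp
  also have "\<dots> = (C * real \<Delta> powr (3 / t)) powr t"
    using \<open>0 < t\<close> assms(3,4) by (simp add: powr_mult powr_powr powr_numeral)
  also have "\<dots> < real q powr t"
    using hq \<open>0 < t\<close> assms(3,4) unfolding t_def by (intro powr_less_mono2) auto
  also have "\<dots> = (real q powr real (k2 - 1)) powr \<beta>"
    using assms(2) by (simp add: t_def powr_powr of_nat_diff mult.commute)
  also have "\<dots> = (real q ^ (k2 - 1)) powr \<beta>"
  proof -
    have "0 < C * real \<Delta> powr (3 / t)" using assms(3,4) by simp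
    then have "0 < real q" using hq unfolding t_def by linarith
    then show ?thesis by (simp add: powr_realpow)
  qed
  finally show ?thesis .
qed

theorem lemma4p7:
  fixes V :: "'a set" and E :: "'b set" and vert :: "'b \<Rightarrow> 'a set"
    and P :: "'b \<Rightarrow> nat set"
    and \<Delta> k k1 k2 q c1 l :: nat and \<beta> C :: real and v :: 'a and e0 :: 'b
  assumes "\<Delta> \<ge> 2" and "0 < k2" and "k2 < k1" and "k1 \<le> k"
    and "0 < \<beta>" and "\<beta> < 1"
    and "finite V" and "finite E"
    and "\<forall>e\<in>E. vert e \<subseteq> V"
    and "\<forall>e\<in>E. P e \<subseteq> {..<q}"
    and "max_degree V E vert = \<Delta>"
    and "\<forall>e\<in>E. k1 \<le> card (vert e) \<and> card (vert e) \<le> k"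
    and "v \<in> V" and "e0 \<in> E" and "v \<in> vert e0"
    and "c1 < q"
    and "real q powr (1 - real k2) < \<beta>"
    and "real q ^ (k1 - 2) > exp 1 * real k * real \<Delta>"
    and "C > 0"
    and "C powr (\<beta> * (real k2 - 1)) \<ge> exp (\<beta> + 3) * real k ^ 3 / \<beta> powr \<beta> * real (k choose k2)"
    and "real q > C * real \<Delta> powr (3 / (\<beta> * (real k2 - 1)))"
    and "l > 0"
  shows "real (card {\<sigma> \<in> C1 V E vert P q v c1. is_bad E vert e0 k2 \<beta> l \<sigma>})
           / real (card (C1 V E vert P q v c1)) \<le> exp (- real l)"
proof -
  have k: "1 \<le> k2" "k2 \<le> k" "2 \<le> k1" "1 \<le> k" "1 \<le> l" using assms(2-4,22) by auto
  have "2 \<le> k2"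
    using assms(19,20) exp_cube_div_powr_gt_one[OF assms(5,6) k(4,2)] k(1) by (cases "k2 = 1") auto
  have "2 \<le> q" using assms(6,16,17) by (cases "q = 1") auto
  have "\<forall>u\<in>V. degree E vert u \<le> \<Delta>"
    using assms(7,11) unfolding max_degree_def by auto
  interpret pinned_hypergraph V E vert P q v c1 \<Delta> k k1
    using assms(1,7-10,12) k \<open>2 \<le> q\<close> \<open>\<forall>u\<in>V. degree E vert u \<le> \<Delta>\<close>
      local_lemma_condition_of_degree_bound[OF k(3) \<open>2 \<le> q\<close> assms(18)]
    by unfold_locales (auto simp: Suc_le_eq)
  define m where "m = nat \<lceil>\<beta> * real l\<rceil>"
  have hQ: "exp (\<beta> + 3) * (real k * real \<Delta>) ^ 3 * real (k choose k2) / \<beta> powr \<beta> < (real q ^ (k2 - 1)) powr \<beta>"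
    by (rule block_condition_of_colour_bound[OF assms(5) \<open>2 \<le> k2\<close> _ assms(19,20,21)]) (use assms(1) in simp)
  have "real (card {\<sigma>\<in>good E. is_bad E vert e0 k2 \<beta> l \<sigma>}) / real (card (good E))
      \<le> real (card (trees e0 l)) * real (l choose m)
        * (real (k choose k2) / ((1 - exp (-1)) * real q ^ (k2 - 1))) ^ m"
    by (rule bad_fraction_le[OF k(1,2) m_def])
  also have "\<dots> \<le> exp (- real l)"
  proof (rule union_bound_le_exp[OF assms(5,6) _ _ _ hQ k(5) m_def card_trees_le[OF k(5)]])
    show "1 \<le> real (k choose k2)" using k(2) by (simp add: Suc_le_eq)
    show "1 \<le> real k * real \<Delta>" using k(4) assms(1) mult_mono[of 1 "real k" 1 "real \<Delta>"] by simp
    show "0 < real q ^ (k2 - 1)" using \<open>2 \<le> q\<close> by simp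
  qed
  finally show ?thesis unfolding C1_eq_proper_on .
qed

end
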